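(* Let $a>b>0$ and $\lambda\ge 0$, and let $D_T$, $D_C$ be the subsets of the plane $\mathbb{R}^2(s,h)$ defined in the context. Put $$\Lambda(a,b)=\frac{a^6-33a^4b^2-33a^2b^4+b^6+(a^4+14a^2b^2+b^4)^{3/2}}{54a^2b^2}.$$ If $\lambda^4<\Lambda(a,b)$, then $D_T$ and $D_C$ have exactly two common points, and these are the points $(s,h)$ determined by $$(a^2-s^2)(s^2-b^2)-2\lambda^2s^3=0,\qquad s>0,\qquad h=\frac{2s^2-s\lambda^2+a^2+b^2}{2s}.$$ If $\lambda^4=\Lambda(a,b)$, these two points merge into a single point at which the curves $D_T$ and $D_C$ are tangent. If $\lambda^4>\Lambda(a,b)$, then $D_T$ and $D_C$ have no common points.
   Context: Parameters: $a>b>0$, $\lambda\ge 0$. Define $$F_C(s,h)=3s^4-2\Big(h-\frac{\lambda^2}{2}\Big)s^3+a^2b^2,\qquad F_T(s,h)=2s^2-2\Big(h+\frac{\lambda^2}{2}\Big)s+a^2+b^2.$$ Sets in the $(s,h)$-plane: $D_T=\{(s,h): F_T(s,h)=0,\ s>0,\ 2\lambda^2 s\le (a+b)^2\}$; $D_C=\{(s,h): F_C(s,h)=0,\ s\in\{-\sqrt{ab}\}\cup(0,s_*]\}$, where $s_*$ is the largest real root of the polynomial $$ \begin{aligned} \Phi_C(s)={}&[a^4b^4-6a^2b^2s^4+4(a^2+b^2)s^6-3s^8]^2\\ &+2[3a^6b^6+3a^4b^4s^4-20a^2b^2(a^2+b^2)s^6+57a^2b^2s^8-12(a^2+b^2)s^{10}+s^{12}]s^3\lambda^2\\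 &+4[3a^4b^4+15a^2b^2s^4-(a^2+b^2)s^6]s^6\lambda^4+8a^2b^2s^9\lambda^6 \end{aligned} $$ (such a root exists and is positive). *)

theory Defs
  imports "HOL-Analysis.Analysis"
begin

definition F_C :: "real \<Rightarrow> real \<Rightarrow> real \<Rightarrow> real \<Rightarrow> real \<Rightarrow> real" where
  "F_C a b lam s h = 3 * s^4 - 2 * (h - lam^2 / 2) * s^3 + a^2 * b^2"

definition F_T :: "real \<Rightarrow> real \<Rightarrow> real \<Rightarrow> real \<Rightarrow> real \<Rightarrow> real" where
  "F_T a b lam s h = 2 * s^2 - 2 * (h + lam^2 / 2) * s + a^2 + b^2"

definition Phi_C :: "real \<Rightarrow> real \<Rightarrow> real \<Rightarrow> real \<Rightarrow> real" where
  "Phi_C a b lam s =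
     (a^4* b^4 - 6* a^2* b^2* s^4 + 4* (a^2+b^2)* s^6 - 3* s^8)^2
   + 2* (3* a^6* b^6 + 3* a^4* b^4* s^4 - 20* a^2* b^2* (a^2+b^2)* s^6 + 57* a^2* b^2* s^8
        - 12* (a^2+b^2)* s^10 + s^12) * s^3 * lam^2
   + 4* (3* a^4* b^4 + 15* a^2* b^2* s^4 - (a^2+b^2)* s^6) * s^6 * lam^4
   + 8* a^2* b^2* s^9* lam^6"

text \<open>s_* : the largest real root of Phi_C (the context guarantees it exists and is positive).\<close>
definition s_star :: "real \<Rightarrow> real \<Rightarrow> real \<Rightarrow> real" where
  "s_star a b lam = Max {s. Phi_C a b lam s = 0}"

definition D_T :: "real \<Rightarrow> real \<Rightarrow> real \<Rightarrow> (real \<times> real) set" where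
  "D_T a b lam = {(s, h). F_T a b lam s h = 0 \<and> s > 0 \<and> 2 * lam^2 * s \<le> (a + b)^2}"

definition D_C :: "real \<Rightarrow> real \<Rightarrow> real \<Rightarrow> (real \<times> real) set" where
  "D_C a b lam = {(s, h). F_C a b lam s h = 0 \<and>
      (s = - sqrt (a * b) \<or> (0 < s \<and> s \<le> s_star a b lam))}"

definition Lambda :: "real \<Rightarrow> real \<Rightarrow> real" where
  "Lambda a b = (a^6 - 33* a^4* b^2 - 33* a^2* b^4 + b^6 + (a^4 + 14* a^2* b^2 + b^4) powr (3/2))
                 / (54 * a^2 * b^2)"

definition CommonSys :: "real \<Rightarrow> real \<Rightarrow> real \<Rightarrow> (real \<times> real) set" where
  "CommonSys a b lam = {(s, h). (a^2 - s^2) * (s^2 - b^2) - 2 * lam^2 * s^3 = 0 \<and> s > 0 \<and>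
      h = (2 * s^2 - s * lam^2 + a^2 + b^2) / (2 * s)}"

text \<open>For s > 0 the curves F_T = 0 and F_C = 0 are graphs h = hT(s), h = hC(s).\<close>
definition hT :: "real \<Rightarrow> real \<Rightarrow> real \<Rightarrow> real \<Rightarrow> real" where
  "hT a b lam s = (2 * s^2 + a^2 + b^2) / (2 * s) - lam^2 / 2"

definition hC :: "real \<Rightarrow> real \<Rightarrow> real \<Rightarrow> real \<Rightarrow> real" where
  "hC a b lam s = (3 * s^4 + a^2 * b^2) / (2 * s^3) + lam^2 / 2"

end

theory Submission
  imports Defs "HOL-Computational_Algebra.Polynomial" "HOL-Real_Asymp.Real_Asymp"
begin

text \<open>
  For \<open>s > 0\<close> the equation \<open>F_T = 0\<close> determines \<open>h\<close>, and substituting it into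
  \<open>F_C = 0\<close> leaves \<open>(a\<^sup>2 - s\<^sup>2) (s\<^sup>2 - b\<^sup>2) = 2 \<lambda>\<^sup>2 s\<^sup>3\<close>, i.e. \<open>psi s = 2 \<lambda>\<^sup>2\<close>
  for \<open>psi s = (a\<^sup>2 - s\<^sup>2) (s\<^sup>2 - b\<^sup>2) / s\<^sup>3\<close>. This function vanishes at \<open>b\<close> and \<open>a\<close> and
  is strictly unimodal on \<open>(0, \<infinity>)\<close>; its maximum is attained at the point \<open>s_crit\<close>
  with \<open>s_crit\<^sup>4 + (a\<^sup>2 + b\<^sup>2) s_crit\<^sup>2 = 3 a\<^sup>2 b\<^sup>2\<close>, where the derivatives of \<open>hT\<close>
  and \<open>hC\<close> agree, and the maximal value satisfies \<open>psi(s_crit)\<^sup>2 / 4 = \<Lambda>(a, b)\<close>.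
  Comparing \<open>2 \<lambda>\<^sup>2\<close> with \<open>psi(s_crit)\<close> therefore counts the common points, once we know
  that the side conditions of \<open>D_T\<close> and \<open>D_C\<close> hold automatically at them.
  Indeed \<open>2 \<lambda>\<^sup>2 s \<le> (a - b)\<^sup>2\<close>, and \<open>s \<le> a \<le> s_*\<close>: writing \<open>\<Phi>_C = Q\<^sup>2 + N R(N)\<close> with
  \<open>N = 2 \<lambda>\<^sup>2 s\<^sup>3\<close>, a rational parametrisation of the quartic \<open>Q = 0\<close> provides a point
  \<open>p \<ge> a\<close> with \<open>Q(p) = 0\<close>, where \<open>R(N) \<le> 0\<close> by an explicit polynomial certificate, so
  \<open>\<Phi>_C(p) \<le> 0\<close> and \<open>\<Phi>_C\<close> has a root beyond \<open>p\<close>.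
\<close>

section \<open>Common points of the two curves\<close>

definition h_common :: "real \<Rightarrow> real \<Rightarrow> real \<Rightarrow> real \<Rightarrow> real" where
  "h_common a b lam s = (2 * s^2 - s * lam^2 + a^2 + b^2) / (2 * s)"

lemma F_T_eq_0_iff:
  assumes "s \<noteq> 0"
  shows "F_T a b lam s h = 0 \<longleftrightarrow> h = h_common a b lam s"
  using assms by (auto simp: F_T_def h_common_def field_simps)

lemma F_C_at_h_common:
  assumes "s \<noteq> 0"
  shows "F_C a b lam s (h_common a b lam s) = 2 * lam^2 * s^3 - (a^2 - s^2) * (s^2 - b^2)"
proof -
  have "2 * h_common a b lam s * s^3 = (2 * s^2 - s * lam^2 + a^2 + b^2) * s^2"
    using assms by (simp add: h_common_def field_simps power2_eq_square power3_eq_cube)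
  then show ?thesis
    unfolding F_C_def by (simp add: algebra_simps) (simp add: power2_eq_square power3_eq_cube
        power4_eq_xxxx algebra_simps)
qed

definition psi :: "real \<Rightarrow> real \<Rightarrow> real \<Rightarrow> real" where
  "psi a b s = (a^2 - s^2) * (s^2 - b^2) / s^3"

lemma common_equation_iff_psi:
  assumes "0 < s"
  shows "(a^2 - s^2) * (s^2 - b^2) - 2 * lam^2 * s^3 = 0 \<longleftrightarrow> psi a b s = 2 * lam^2"
  using assms by (auto simp: psi_def field_simps)

lemma CommonSys_eq_image:
  "CommonSys a b lam = (\<lambda>s. (s, h_common a b lam s)) ` {s. 0 < s \<and> psi a b s = 2 * lam^2}"
  unfolding CommonSys_def h_common_def using common_equation_iff_psi by auto

lemma psi_eq_imp_bounds:
  assumes "0 < b" "b < a" "0 < s" "psi a b s = 2 * lam^2"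
  shows "b \<le> s" "s \<le> a" "2 * lam^2 * s \<le> (a - b)^2"
proof -
  have prod: "(a^2 - s^2) * (s^2 - b^2) = 2 * lam^2 * s^3"
    using assms common_equation_iff_psi[of s a b lam] by simp
  then have "0 \<le> (a^2 - s^2) * (s^2 - b^2)"
    using assms by simp
  then show "b \<le> s" "s \<le> a"
    using assms by (smt (verit) mult_less_0_iff power_strict_mono zero_less_numeral)+
  have "(a - b)^2 * s^2 - 2 * lam^2 * s^3 = (s^2 - a * b)^2"
    using prod by algebra
  then have "2 * lam^2 * s^3 \<le> (a - b)^2 * s^2"
    by (smt (verit) zero_le_power2)
  then have "(2 * lam^2 * s) * s^2 \<le> (a - b)^2 * s^2"
    by (simp add: power2_eq_square power3_eq_cube mult_ac)
  then show "2 * lam^2 * s \<le> (a - b)^2"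
    using assms by simp
qed

lemma hT_hC_same_derivative:
  assumes "0 < s" "s^2 * (a^2 + b^2 + s^2) = 3 * a^2 * b^2"
  shows "\<exists>d. (hT a b lam has_real_derivative d) (at s) \<and>
    (hC a b lam has_real_derivative d) (at s)"
proof -
  have "hT a b lam = (\<lambda>s. (2 * s^2 + a^2 + b^2) / (2 * s) - lam^2 / 2)"
    by (rule ext) (simp add: hT_def)
  then have T: "(hT a b lam has_real_derivative (1 - (a^2 + b^2) / (2 * s^2))) (at s)"
    using assms by (auto intro!: derivative_eq_intros simp: field_simps power2_eq_square)
  have "hC a b lam = (\<lambda>s. (3 * s^4 + a^2 * b^2) / (2 * s^3) + lam^2 / 2)"
    by (rule ext) (simp add: hC_def)
  then have C: "(hC a b lam has_real_derivative (3/2 - 3 * a^2 * b^2 / (2 * s^4))) (at s)"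
    using assms by (auto intro!: derivative_eq_intros
        simp: field_simps power2_eq_square power3_eq_cube power4_eq_xxxx)
  have "3 * a^2 * b^2 / (2 * s^4) = 1/2 + (a^2 + b^2) / (2 * s^2)"
    unfolding assms(2)[symmetric] using assms(1)
    by (simp add: field_simps power2_eq_square power4_eq_xxxx)
  with T C show ?thesis by auto
qed

section \<open>Unimodality of psi\<close>

lemma psi_has_real_derivative:
  assumes "s \<noteq> 0"
  shows "(psi a b has_real_derivative (3 * a^2 * b^2 - (a^2 + b^2) * s^2 - s^4) / s^4) (at s)"
proof -
  have "psi a b = (\<lambda>s. (a^2 - s^2) * (s^2 - b^2) / s^3)" by (rule ext) (simp add: psi_def)
  then show ?thesis using assms
    by (auto intro!: derivative_eq_intros
        simp: field_simps power2_eq_square power3_eq_cube power4_eq_xxxx)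
qed

lemma powr_three_halves:
  fixes x :: real
  assumes "0 < x"
  shows "x powr (3/2) = sqrt x ^ 3"
proof -
  have "x powr (3/2) = (x powr (1/2)) ^ 3"
    using assms by (simp add: powr_powr flip: powr_realpow)
  then show ?thesis using assms by (simp add: powr_half_sqrt)
qed

locale semiaxes =
  fixes a b :: real
  assumes b_pos: "0 < b" and b_less_a: "b < a"
begin

definition x_crit :: real where
  "x_crit = (sqrt (a^4 + 14 * a^2 * b^2 + b^4) - (a^2 + b^2)) / 2"

definition s_crit :: real where
  "s_crit = sqrt x_crit"

lemma x_crit_equation: "x_crit * (a^2 + b^2 + x_crit) = 3 * a^2 * b^2"
proof -
  have "(sqrt (a^4 + 14 * a^2 * b^2 + b^4))^2 = a^4 + 14 * a^2 * b^2 + b^4"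
    by (simp add: add_nonneg_nonneg)
  then show ?thesis unfolding x_crit_def by (simp add: field_simps power2_eq_square power4_eq_xxxx)
qed

lemma x_crit_pos: "0 < x_crit"
proof -
  have "(a^2 + b^2)^2 < a^4 + 14 * a^2 * b^2 + b^4"
    using b_pos b_less_a by (simp add: power2_eq_square power4_eq_xxxx algebra_simps)
  then have "a^2 + b^2 < sqrt (a^4 + 14 * a^2 * b^2 + b^4)"
    by (simp add: real_less_rsqrt)
  then show ?thesis unfolding x_crit_def by simp
qed

lemma s_crit_pos: "0 < s_crit"
  using x_crit_pos by (simp add: s_crit_def)

lemma s_crit_squared: "s_crit^2 = x_crit"
  using x_crit_pos by (simp add: s_crit_def)

lemma psi_derivative_numerator:
  "3 * a^2 * b^2 - (a^2 + b^2) * s^2 - s^4 = x_crit * (a^2 + b^2 + x_crit) - s^2 * (a^2 + b^2 + s^2)"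
  using x_crit_equation by (simp add: power2_eq_square power4_eq_xxxx algebra_simps)

lemma psi_derivative_pos:
  assumes "0 < s" "s < s_crit"
  shows "0 < (3 * a^2 * b^2 - (a^2 + b^2) * s^2 - s^4) / s^4"
proof -
  have "s^2 < x_crit"
    using assms by (metis s_crit_squared power_strict_mono less_imp_le zero_less_numeral)
  then have "s^2 * (a^2 + b^2 + s^2) < x_crit * (a^2 + b^2 + x_crit)"
    using x_crit_pos by (intro mult_strict_mono) auto
  then show ?thesis using assms by (simp add: psi_derivative_numerator)
qed

lemma psi_derivative_neg:
  assumes "s_crit < s"
  shows "(3 * a^2 * b^2 - (a^2 + b^2) * s^2 - s^4) / s^4 < 0"
proof -
  have "x_crit < s^2"
    using assms s_crit_pos by (metis s_crit_squared power_strict_mono less_imp_le zero_less_numeral)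
  then have "x_crit * (a^2 + b^2 + x_crit) < s^2 * (a^2 + b^2 + s^2)"
    using x_crit_pos by (intro mult_strict_mono) auto
  then show ?thesis using assms s_crit_pos by (simp add: psi_derivative_numerator divide_neg_pos)
qed

lemma continuous_on_psi: "0 < u \<Longrightarrow> continuous_on {u..v} (psi a b)"
  unfolding psi_def by (intro continuous_intros) auto

lemma psi_strict_mono:
  assumes "0 < s" "s < t" "t \<le> s_crit"
  shows "psi a b s < psi a b t"
proof (rule DERIV_pos_imp_increasing_open[OF \<open>s < t\<close> _ continuous_on_psi[OF \<open>0 < s\<close>]])
  fix x assume "s < x" "x < t"
  then have "0 < x" "x < s_crit" using assms by auto
  then show "\<exists>y. (psi a b has_real_derivative y) (at x) \<and> 0 < y"
    using psi_has_real_derivative[of x a b] psi_derivative_pos[of x] by force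
qed

lemma psi_strict_antimono:
  assumes "s_crit \<le> s" "s < t"
  shows "psi a b t < psi a b s"
proof (rule DERIV_neg_imp_decreasing_open[OF \<open>s < t\<close> _ continuous_on_psi])
  fix x assume "s < x" "x < t"
  then have "0 < x" "s_crit < x" using assms s_crit_pos by auto
  then show "\<exists>y. (psi a b has_real_derivative y) (at x) \<and> y < 0"
    using psi_has_real_derivative[of x a b] psi_derivative_neg[of x] by force
qed (use assms s_crit_pos in auto)

lemma psi_at_b: "psi a b b = 0" and psi_at_a: "psi a b a = 0"
  by (simp_all add: psi_def)

lemma s_crit_between: "b < s_crit" "s_crit < a"
proof -
  show "b < s_crit"
    using psi_strict_antimono[of b a] b_less_a by (force simp: psi_at_a psi_at_b)
  show "s_crit < a"
    using psi_strict_mono[of b a] b_pos b_less_a by (force simp: psi_at_a psi_at_b)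
qed

lemma psi_less_psi_s_crit:
  assumes "0 < s" "s \<noteq> s_crit"
  shows "psi a b s < psi a b s_crit"
  using assms psi_strict_mono[of s s_crit] psi_strict_antimono[of s_crit s] by force

lemma psi_s_crit_pos: "0 < psi a b s_crit"
  using psi_less_psi_s_crit[of b] b_pos s_crit_between by (simp add: psi_at_b)

lemma inj_on_psi_left: "inj_on (psi a b) {0<..s_crit}"
proof (rule inj_onI)
  fix s t assume "s \<in> {0<..s_crit}" "t \<in> {0<..s_crit}" "psi a b s = psi a b t"
  then show "s = t"
    using psi_strict_mono[of s t] psi_strict_mono[of t s] by (cases s t rule: linorder_cases) auto
qed

lemma inj_on_psi_right: "inj_on (psi a b) {s_crit..}"
proof (rule inj_onI)
  fix s t assume "s \<in> {s_crit..}" "t \<in> {s_crit..}" "psi a b s = psi a b t"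
  then show "s = t"
    using psi_strict_antimono[of s t] psi_strict_antimono[of t s]
    by (cases s t rule: linorder_cases) auto
qed

lemma psi_level_set_below_max:
  assumes "0 \<le> c" "c < psi a b s_crit"
  shows "\<exists>s1 s2. s1 < s2 \<and> {s. 0 < s \<and> psi a b s = c} = {s1, s2}"
proof -
  obtain s1 where s1: "b \<le> s1" "s1 \<le> s_crit" "psi a b s1 = c"
    using IVT'[of "psi a b" b c s_crit] assms s_crit_between continuous_on_psi b_pos
    by (auto simp: psi_at_b)
  obtain s2 where s2: "s_crit \<le> s2" "s2 \<le> a" "psi a b s2 = c"
    using IVT2'[of "psi a b" a c s_crit] assms s_crit_between continuous_on_psi s_crit_pos
    by (auto simp: psi_at_a)
  have "s1 \<noteq> s_crit" "s2 \<noteq> s_crit" using s1 s2 assms by auto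
  with s1 s2 have "s1 < s2" by linarith
  have "s = s1 \<or> s = s2" if "0 < s" "psi a b s = c" for s
  proof (cases "s \<le> s_crit")
    case True
    then show ?thesis using inj_on_psi_left s1 b_pos that by (auto dest: inj_onD)
  next
    case False
    then show ?thesis using inj_on_psi_right s2 that by (auto dest: inj_onD)
  qed
  then have "{s. 0 < s \<and> psi a b s = c} = {s1, s2}"
    using s1 s2 b_pos s_crit_pos by auto
  with \<open>s1 < s2\<close> show ?thesis by blast
qed

lemma psi_level_set_max: "{s. 0 < s \<and> psi a b s = psi a b s_crit} = {s_crit}"
  using psi_less_psi_s_crit s_crit_pos by force

lemma psi_level_set_above_max:
  "psi a b s_crit < c \<Longrightarrow> {s. 0 < s \<and> psi a b s = c} = {}"
  using psi_less_psi_s_crit by force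

lemma Lambda_eq_psi_s_crit: "Lambda a b = (psi a b s_crit)^2 / 4"
proof -
  define S where "S = a^2 + b^2"
  define x where "x = x_crit"
  have S_nonneg: "0 \<le> S" by (simp add: S_def)
  have x_pos: "0 < x" and ab: "a^2 * b^2 = x * (S + x) / 3"
    using x_crit_pos x_crit_equation by (simp_all add: x_def S_def)
  have "sqrt (a^4 + 14 * a^2 * b^2 + b^4) = 2 * x + S"
    by (simp add: x_def S_def x_crit_def field_simps)
  moreover have "0 < a^4 + 14 * a^2 * b^2 + b^4"
    using b_pos by (simp add: add_nonneg_pos)
  ultimately have root: "(a^4 + 14 * a^2 * b^2 + b^4) powr (3/2) = (2 * x + S)^3"
    by (simp add: powr_three_halves)
  have numerator: "a^6 - 33 * a^4 * b^2 - 33 * a^2 * b^4 + b^6 = S^3 - 36 * (a^2 * b^2) * S"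
    unfolding S_def by algebra
  have "Lambda a b = (S^3 - 36 * (a^2 * b^2) * S + (2 * x + S)^3) / (54 * (a^2 * b^2))"
    unfolding Lambda_def root numerator by (simp only: mult.assoc)
  also have "\<dots> = 2 * (S - 2 * x)^2 * (S + x) / (18 * x * (S + x))"
  proof -
    have "S^3 - 36 * (a^2 * b^2) * S + (2 * x + S)^3 = 2 * (S - 2 * x)^2 * (S + x)"
      unfolding ab by algebra
    moreover have "54 * (a^2 * b^2) = 18 * x * (S + x)"
      unfolding ab by simp
    ultimately show ?thesis by (simp only:)
  qed
  also have "\<dots> = 2 * (S - 2 * x)^2 / (18 * x)"
    using x_pos S_nonneg by (intro nonzero_mult_divide_mult_cancel_right) linarith
  also have "\<dots> = (2 * x * (S - 2 * x) / 3)^2 / x^3 / 4"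
    using x_pos by (simp add: field_simps power2_eq_square power3_eq_cube)
  also have "2 * x * (S - 2 * x) / 3 = (a^2 - s_crit^2) * (s_crit^2 - b^2)"
    unfolding s_crit_squared x_def[symmetric] using ab unfolding S_def by (simp add: field_simps)
  also have "x^3 = (s_crit^3)^2"
    by (simp add: x_def flip: s_crit_squared power_mult)
  finally show ?thesis by (simp add: psi_def power_divide)
qed

lemma psi_level_set_by_Lambda:
  fixes lam :: real
  defines "L \<equiv> {s. 0 < s \<and> psi a b s = 2 * lam^2}"
  shows "lam^4 < Lambda a b \<Longrightarrow> \<exists>s1 s2. s1 < s2 \<and> L = {s1, s2}"
    and "lam^4 = Lambda a b \<Longrightarrow> L = {s_crit}"
    and "Lambda a b < lam^4 \<Longrightarrow> L = {}"
proof -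
  define c M where "c = 2 * lam^2" and "M = psi a b s_crit"
  have c_nonneg: "0 \<le> c" and lam4: "lam^4 = c^2 / 4" and Lambda_M: "Lambda a b = M^2 / 4"
    by (simp_all add: c_def M_def Lambda_eq_psi_s_crit power_mult_distrib flip: power_mult)
  have le_iff: "lam^4 \<le> Lambda a b \<longleftrightarrow> c \<le> M"
    and ge_iff: "Lambda a b \<le> lam^4 \<longleftrightarrow> M \<le> c"
    unfolding lam4 Lambda_M using c_nonneg psi_s_crit_pos by (simp_all add: M_def)
  have L: "L = {s. 0 < s \<and> psi a b s = c}"
    by (simp add: L_def c_def)
  show "\<exists>s1 s2. s1 < s2 \<and> L = {s1, s2}" if "lam^4 < Lambda a b"
    using that ge_iff c_nonneg psi_level_set_below_max unfolding L M_def by (meson not_le)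
  show "L = {s_crit}" if "lam^4 = Lambda a b"
  proof -
    have "c = M"
      using that le_iff ge_iff by (simp add: order.antisym)
    then show ?thesis
      unfolding L M_def by (simp add: psi_level_set_max)
  qed
  show "L = {}" if "Lambda a b < lam^4"
    using that le_iff psi_level_set_above_max unfolding L M_def by (meson not_le)
qed
end

section \<open>A point beyond \<open>a\<close> where \<open>Phi_C\<close> is nonpositive\<close>

definition phi_Q :: "real \<Rightarrow> real \<Rightarrow> real \<Rightarrow> real" where
  "phi_Q al be S = al^2 * be^2 - 6 * al * be * S^2 + 4 * (al + be) * S^3 - 3 * S^4"

definition phi_A :: "real \<Rightarrow> real \<Rightarrow> real \<Rightarrow> real" where
  "phi_A al be S = 3 * al^3 * be^3 + 3 * al^2 * be^2 * S^2 - 20 * al * be * (al + be) * S^3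
     + 57 * al * be * S^4 - 12 * (al + be) * S^5 + S^6"

definition phi_B :: "real \<Rightarrow> real \<Rightarrow> real \<Rightarrow> real" where
  "phi_B al be S = 3 * al^2 * be^2 + 15 * al * be * S^2 - (al + be) * S^3"

definition phi_R :: "real \<Rightarrow> real \<Rightarrow> real \<Rightarrow> real \<Rightarrow> real" where
  "phi_R al be S N = phi_A al be S + N * phi_B al be S + N^2 * (al * be)"

lemma Phi_C_cubic:
  "Phi_C a b lam s
    = (phi_Q (a^2) (b^2) (s^2))^2 + (2 * lam^2 * s^3) * phi_R (a^2) (b^2) (s^2) (2 * lam^2 * s^3)"
  unfolding Phi_C_def phi_Q_def phi_R_def phi_A_def phi_B_def by (simp flip: power_mult) algebra

lemma phi_Q_scale: "phi_Q (k * al) (k * be) (k * S) = k^4 * phi_Q al be S"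
  unfolding phi_Q_def by algebra

lemma phi_R_scale: "phi_R (k * al) (k * be) (k * S) (k^2 * N) = k^6 * phi_R al be S N"
  unfolding phi_R_def phi_A_def phi_B_def by algebra

text \<open>
  A rational parametrisation of the curve \<open>phi_Q \<alpha> \<beta> S = 0\<close>; as \<open>phi_Q\<close> is homogeneous,
  its scalings reach every ratio \<open>\<alpha> / \<beta> > 1\<close>.
\<close>

definition curve_alpha :: "real \<Rightarrow> real" where "curve_alpha t = (1 + t)^3 * (1 + 3 * t)"
definition curve_beta :: "real \<Rightarrow> real" where "curve_beta t = (1 + 2 * t)^3"
definition curve_S :: "real \<Rightarrow> real" where "curve_S t = (1 + 2 * t)^2 * (1 + t)^2"

lemma phi_Q_curve: "phi_Q (curve_alpha t) (curve_beta t) (curve_S t) = 0"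
  unfolding phi_Q_def curve_alpha_def curve_beta_def curve_S_def by algebra

definition phi_B_majorant :: "real \<Rightarrow> real" where
  "phi_B_majorant t = 16 + t * (384 + t * (4248 + t * (28728 + t * (132789 + t * (444258
     + t * (1110991 + t * (2113944 + t * (3084159 + t * (3447882 + t * (2926377 + t * (1848420
     + t * (837916 + t * (254976 + t * (45168 + t * 2880))))))))))))))"

definition certificate_poly :: "real \<Rightarrow> real" where
  "certificate_poly t = 16 + t * (480 + t * (6804 + t * (60604 + t * (380479 + t * (1789932
     + t * (6547927 + t * (19076090 + t * (44956545 + t * (86569822 + t * (136998079
     + t * (178572384 + t * (191540512 + t * (168373922 + t * (120387990 + t * (69201046
     + t * (31427344 + t * (10975944 + t * (2812128 + t * (478880 + t * 41280)))))))))))))))))))"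

lemma phi_B_curve:
  "phi_B (curve_alpha t) (curve_beta t) (curve_S t) = phi_B_majorant t - 192 * t^16"
  unfolding phi_B_def curve_alpha_def curve_beta_def curve_S_def phi_B_majorant_def by algebra

lemma certificate_identity:
  "curve_alpha t * phi_A (curve_alpha t) (curve_beta t) (curve_S t)
     + phi_B_majorant t * (curve_alpha t - curve_beta t)^2 * (1 + 2 * t) * (1 + t)^4
     + (curve_S t)^3 * (curve_alpha t - curve_beta t)^4
   = - (t^8 * certificate_poly t)"
  unfolding phi_A_def curve_alpha_def curve_beta_def curve_S_def phi_B_majorant_def
    certificate_poly_def by algebra

lemma phi_B_majorant_nonneg: "0 \<le> t \<Longrightarrow> 0 \<le> phi_B_majorant t"
  unfolding phi_B_majorant_def by (intro add_nonneg_nonneg mult_nonneg_nonneg; simp)+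

lemma certificate_poly_nonneg: "0 \<le> t \<Longrightarrow> 0 \<le> certificate_poly t"
  unfolding certificate_poly_def by (intro add_nonneg_nonneg mult_nonneg_nonneg; simp)+

lemma phi_R_le_at_bound:
  assumes "0 < al" "0 \<le> be" "0 \<le> n" "n \<le> V" "phi_B al be S \<le> M" "0 \<le> M"
  shows "al * phi_R al be S n \<le> al * phi_A al be S + (al * V) * M + be * (al * V)^2"
proof -
  have "n * phi_B al be S \<le> V * M"
    using assms by (meson mult_left_mono mult_right_mono order_trans)
  then have "al * (n * phi_B al be S) \<le> (al * V) * M"
    using assms(1) by (simp add: mult_left_mono mult.assoc)
  moreover have "be * (al * n)^2 \<le> be * (al * V)^2"
    using assms by (intro mult_left_mono power_mono) simp_all
  moreover have "al * phi_R al be S n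
      = al * phi_A al be S + al * (n * phi_B al be S) + be * (al * n)^2"
    by (simp add: phi_R_def algebra_simps power2_eq_square)
  ultimately show ?thesis
    by linarith
qed

lemma phi_R_nonpos_on_curve:
  assumes t: "0 < t" and w: "0 < w" "w^2 = 1 + 2 * t" and n: "0 \<le> n"
    and n_le: "n \<le> (curve_alpha t - curve_beta t)^2 * (1 + 2 * t) * (1 + t)^3 * w / curve_alpha t"
  shows "phi_R (curve_alpha t) (curve_beta t) (curve_S t) n \<le> 0"
proof -
  define al be S where "al = curve_alpha t" and "be = curve_beta t" and "S = curve_S t"
  define M where "M = phi_B_majorant t"
  define V where "V = (al - be)^2 * (1 + 2 * t) * (1 + t)^3 * w / al"
  have al_pos: "0 < al" and be_pos: "0 < be" and M_nonneg: "0 \<le> M"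
    using t phi_B_majorant_nonneg
    by (simp_all add: al_def be_def M_def curve_alpha_def curve_beta_def)
  have "phi_B al be S \<le> M" "n \<le> V"
    using t n_le by (simp_all add: al_def be_def S_def M_def V_def phi_B_curve)
  then have bound: "al * phi_R al be S n \<le> al * phi_A al be S + (al * V) * M + be * (al * V)^2"
    using al_pos be_pos n M_nonneg by (intro phi_R_le_at_bound) simp_all
  have alV: "al * V = (al - be)^2 * (1 + 2 * t) * (1 + t)^3 * w"
    using al_pos by (simp add: V_def)
  have w_le: "w \<le> 1 + t"
  proof (rule power2_le_imp_le)
    show "w^2 \<le> (1 + t)^2"
      using w(2) by (simp add: power2_eq_square algebra_simps)
  qed (use t in simp)
  have "(al * V) * M = M * (al - be)^2 * (1 + 2 * t) * (1 + t)^3 * w"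
    unfolding alV by (simp only: mult_ac)
  also have "\<dots> \<le> M * (al - be)^2 * (1 + 2 * t) * (1 + t)^3 * (1 + t)"
    using w_le M_nonneg t by (intro mult_left_mono) simp_all
  also have "\<dots> = M * (al - be)^2 * (1 + 2 * t) * (1 + t)^4"
    by algebra
  finally have linear_part: "(al * V) * M \<le> M * (al - be)^2 * (1 + 2 * t) * (1 + t)^4" .
  have alV_squared: "(al * V)^2 = (al - be)^4 * (1 + 2 * t)^2 * (1 + t)^6 * w^2"
    unfolding alV by algebra
  have square_part: "be * (al * V)^2 = S^3 * (al - be)^4"
    unfolding alV_squared w(2) by (simp add: be_def S_def curve_beta_def curve_S_def) algebra
  have "al * phi_A al be S + M * (al - be)^2 * (1 + 2 * t) * (1 + t)^4 + S^3 * (al - be)^4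
      = - (t^8 * certificate_poly t)"
    unfolding al_def be_def S_def M_def by (rule certificate_identity)
  moreover have "0 \<le> t^8 * certificate_poly t"
    using t certificate_poly_nonneg[of t] by simp
  ultimately have "al * phi_R al be S n \<le> 0"
    using bound linear_part square_part by linarith
  then show ?thesis
    using al_pos by (simp add: al_def be_def S_def mult_le_0_iff)
qed

lemma exists_curve_parameter:
  assumes "0 < b" "b < a"
  shows "\<exists>t>0. b^2 * curve_alpha t = a^2 * curve_beta t"
proof -
  define f where "f t = b^2 * curve_alpha t - a^2 * curve_beta t" for t
  define T where "T = 8 * a^2 / (3 * b^2)"
  have T_pos: "0 < T"
    using assms by (simp add: T_def)
  have "f 0 < 0"
    using assms by (simp add: f_def curve_alpha_def curve_beta_def power_strict_mono)
  moreover have "0 \<le> f T"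
  proof -
    have "a^2 * curve_beta T \<le> a^2 * (2 * (1 + T))^3"
      unfolding curve_beta_def using T_pos by (intro mult_left_mono power_mono) auto
    also have "\<dots> = (8 * a^2) * (1 + T)^3"
      by algebra
    also have "\<dots> \<le> (b^2 + 8 * a^2) * (1 + T)^3"
      using T_pos by (intro mult_right_mono) auto
    also have "b^2 + 8 * a^2 = b^2 * (1 + 3 * T)"
      using assms by (simp add: T_def field_simps)
    finally show ?thesis
      by (simp add: f_def curve_alpha_def mult_ac)
  qed
  moreover have "continuous_on {0..T} f"
    unfolding f_def curve_alpha_def curve_beta_def by (intro continuous_intros)
  ultimately obtain t where "0 \<le> t" "t \<le> T" "f t = 0"
    using IVT'[of f 0 0 T] T_pos by auto
  moreover from this \<open>f 0 < 0\<close> have "t \<noteq> 0" by auto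
  ultimately show ?thesis
    unfolding f_def by (intro exI[of _ t]) auto
qed

lemma Phi_C_on_scaled_curve:
  fixes lam :: real
  assumes "r \<noteq> 0" "a^2 = r^2 * curve_alpha t" "b^2 = r^2 * curve_beta t" "p^2 = r^2 * curve_S t"
  defines "n \<equiv> 2 * lam^2 * p^3 / r^4"
  shows "Phi_C a b lam p = r^16 * n * phi_R (curve_alpha t) (curve_beta t) (curve_S t) n"
proof -
  have N: "2 * lam^2 * p^3 = (r^2)^2 * n"
    using assms(1) by (simp add: n_def flip: power_mult)
  show ?thesis
    unfolding Phi_C_cubic N assms(2-4) phi_Q_scale phi_R_scale phi_Q_curve
    by (simp flip: power_mult)
qed

lemma exists_curve_scaling:
  assumes "0 < b" "b < a"
  obtains t r w where "0 < t" "0 < r" "0 < w" "w^2 = 1 + 2 * t" "b = r * (1 + 2 * t) * w"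
    "a^2 = r^2 * curve_alpha t" "b^2 = r^2 * curve_beta t"
proof -
  obtain t where t: "0 < t" and ratio: "b^2 * curve_alpha t = a^2 * curve_beta t"
    using exists_curve_parameter[OF assms] by blast
  define w where "w = sqrt (1 + 2 * t)"
  define r where "r = b / ((1 + 2 * t) * w)"
  have w: "0 < w" "w^2 = 1 + 2 * t"
    using t by (simp_all add: w_def)
  have r_pos: "0 < r"
    using assms t w by (simp add: r_def)
  have b_eq: "b = r * (1 + 2 * t) * w"
    using t w by (simp add: r_def)
  have b2: "b^2 = r^2 * curve_beta t"
    unfolding b_eq curve_beta_def by (simp add: power_mult_distrib w(2)) algebra
  moreover have "a^2 = r^2 * curve_alpha t"
  proof -
    have "0 < curve_beta t"
      using t by (simp add: curve_beta_def)
    then show ?thesis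
      using ratio unfolding b2 by (simp add: mult_ac)
  qed
  ultimately show ?thesis
    using that t r_pos w b_eq by blast
qed

lemma scaled_N_le:
  assumes t: "0 < t" and r: "0 < r" and w: "0 < w" "w^2 = 1 + 2 * t"
    and b: "b = r * (1 + 2 * t) * w"
    and a2: "a^2 = r^2 * curve_alpha t" and b2: "b^2 = r^2 * curve_beta t"
    and lam: "2 * lam^2 * a^2 * b \<le> (a^2 - b^2)^2"
  shows "2 * lam^2 * (r * (1 + 2 * t) * (1 + t))^3 / r^4
    \<le> (curve_alpha t - curve_beta t)^2 * (1 + 2 * t) * (1 + t)^3 * w / curve_alpha t"
proof -
  define al be where "al = curve_alpha t" and "be = curve_beta t"
  have al_pos: "0 < al"
    using t by (simp add: al_def curve_alpha_def)
  have "2 * lam^2 * al * (1 + 2 * t) * w * r^3 = 2 * lam^2 * a^2 * b"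
    unfolding a2 al_def by (subst b) (simp add: power2_eq_square power3_eq_cube)
  also have "\<dots> \<le> (a^2 - b^2)^2"
    by (rule lam)
  also have "\<dots> = r * (al - be)^2 * r^3"
    unfolding a2 b2 al_def be_def by algebra
  finally have K: "2 * lam^2 * al * (1 + 2 * t) * w \<le> r * (al - be)^2"
    using r by simp
  define c where "c = (1 + 2 * t)^2 * (1 + t)^3 / (r * al * w)"
  have "2 * lam^2 * (r * (1 + 2 * t) * (1 + t))^3 / r^4 = 2 * lam^2 * al * (1 + 2 * t) * w * c"
    using r al_pos w by (simp add: c_def field_simps power_mult_distrib power2_eq_square
        power3_eq_cube power4_eq_xxxx)
  also have "\<dots> \<le> r * (al - be)^2 * c"
    using K r al_pos w t by (intro mult_right_mono) (simp_all add: c_def)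
  also have "\<dots> = (al - be)^2 * (1 + 2 * t) * (1 + t)^3 * w / al"
    using r al_pos w by (simp add: c_def field_simps flip: w(2)) algebra
  finally show ?thesis
    by (simp add: al_def be_def)
qed

lemma Phi_C_nonpos_beyond_a:
  assumes ab: "0 < b" "b < a" and lam: "2 * lam^2 * a^2 * b \<le> (a^2 - b^2)^2"
  shows "\<exists>p\<ge>a. Phi_C a b lam p \<le> 0"
proof -
  obtain t r w where t: "0 < t" and r: "0 < r" and w: "0 < w" "w^2 = 1 + 2 * t"
    and b: "b = r * (1 + 2 * t) * w"
    and a2: "a^2 = r^2 * curve_alpha t" and b2: "b^2 = r^2 * curve_beta t"
    using exists_curve_scaling[OF ab] by blast
  define p where "p = r * (1 + 2 * t) * (1 + t)"
  define n where "n = 2 * lam^2 * p^3 / r^4"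
  have p2: "p^2 = r^2 * curve_S t"
    by (simp add: p_def curve_S_def power_mult_distrib)
  have "a \<le> p"
  proof (rule power2_le_imp_le)
    have "curve_S t - curve_alpha t = t^2 * (1 + t)^2"
      by (simp add: curve_S_def curve_alpha_def) algebra
    then have "curve_alpha t \<le> curve_S t"
      by (metis diff_ge_0_iff_ge zero_le_mult_iff zero_le_power2)
    then show "a^2 \<le> p^2"
      unfolding a2 p2 by (simp add: mult_left_mono)
  qed (use r t in \<open>simp add: p_def\<close>)
  have "0 \<le> n"
    using r t by (simp add: n_def p_def)
  moreover have "n \<le> (curve_alpha t - curve_beta t)^2 * (1 + 2 * t) * (1 + t)^3 * w / curve_alpha t"
    unfolding n_def p_def using t r w b a2 b2 lam by (rule scaled_N_le)
  ultimately have "phi_R (curve_alpha t) (curve_beta t) (curve_S t) n \<le> 0"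
    using phi_R_nonpos_on_curve t w by blast
  moreover have "Phi_C a b lam p = r^16 * n * phi_R (curve_alpha t) (curve_beta t) (curve_S t) n"
    unfolding n_def using r a2 b2 p2 by (intro Phi_C_on_scaled_curve) simp_all
  ultimately have "Phi_C a b lam p \<le> 0"
    using r \<open>0 \<le> n\<close> by (simp add: mult_nonneg_nonpos)
  with \<open>a \<le> p\<close> show ?thesis by blast
qed

lemma finite_Phi_C_zeros:
  assumes "a \<noteq> 0" "b \<noteq> 0"
  shows "finite {s. Phi_C a b lam s = 0}"
proof -
  define X :: "real poly" where "X = [:0, 1:]"
  define P where "P =
    ([:a^4 * b^4:] - [:6 * a^2 * b^2:] * X^4 + [:4 * (a^2 + b^2):] * X^6 - [:3:] * X^8)^2
    + [:2:] * ([:3 * a^6 * b^6:] + [:3 * a^4 * b^4:] * X^4 - [:20 * a^2 * b^2 * (a^2 + b^2):] * X^6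
      + [:57 * a^2 * b^2:] * X^8 - [:12 * (a^2 + b^2):] * X^10 + X^12) * X^3 * [:lam^2:]
    + [:4:] * ([:3 * a^4 * b^4:] + [:15 * a^2 * b^2:] * X^4 - [:a^2 + b^2:] * X^6) * X^6 * [:lam^4:]
    + [:8 * a^2 * b^2:] * X^9 * [:lam^6:]"
  have eval: "poly P s = Phi_C a b lam s" for s
    unfolding P_def X_def Phi_C_def
    by (simp only: poly_add poly_diff poly_mult poly_power poly_pCons poly_0 mult_zero_right
        add_0_right add_0_left mult_1_right)
  have "P \<noteq> 0"
    using eval[of 0] assms by (auto simp: Phi_C_def)
  then show ?thesis
    using poly_roots_finite[of P] by (simp add: eval)
qed

lemma le_s_star:
  assumes "a \<noteq> 0" "b \<noteq> 0" "Phi_C a b lam p \<le> 0"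
  shows "p \<le> s_star a b lam"
proof -
  have "filterlim (Phi_C a b lam) at_top at_top"
    unfolding Phi_C_def by real_asymp
  then obtain R where R: "\<And>x. R \<le> x \<Longrightarrow> 0 \<le> Phi_C a b lam x"
    by (auto simp: filterlim_at_top eventually_at_top_linorder)
  have "continuous_on {p..max R p} (Phi_C a b lam)"
    unfolding Phi_C_def by (intro continuous_intros)
  then obtain q where "p \<le> q" "Phi_C a b lam q = 0"
    using IVT'[of "Phi_C a b lam" p 0 "max R p"] assms(3) R[of "max R p"] by auto
  moreover have "q \<le> s_star a b lam"
    unfolding s_star_def using finite_Phi_C_zeros[OF assms(1,2)] \<open>Phi_C a b lam q = 0\<close>
    by (intro Max_ge) auto
  ultimately show ?thesis by simp
qed

lemma psi_eq_imp_le_s_star: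
  assumes "0 < b" "b < a" "0 < s" "psi a b s = 2 * lam^2"
  shows "s \<le> s_star a b lam"
proof -
  have "2 * lam^2 * b \<le> 2 * lam^2 * s"
    using psi_eq_imp_bounds(1)[OF assms] by (intro mult_left_mono) simp_all
  then have "2 * lam^2 * b \<le> (a - b)^2"
    using psi_eq_imp_bounds(3)[OF assms] by linarith
  then have "a^2 * (2 * lam^2 * b) \<le> (a + b)^2 * (a - b)^2"
    using assms by (intro mult_mono power_mono) auto
  also have "\<dots> = (a^2 - b^2)^2"
    by algebra
  finally have "2 * lam^2 * a^2 * b \<le> (a^2 - b^2)^2"
    by (simp add: mult_ac)
  then obtain p where "a \<le> p" "Phi_C a b lam p \<le> 0"
    using Phi_C_nonpos_beyond_a assms(1,2) by blast
  then show ?thesis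
    using le_s_star[of a b lam p] psi_eq_imp_bounds(2)[OF assms] assms(1,2) by simp
qed

lemma D_T_inter_D_C_eq_CommonSys:
  assumes "0 < b" "b < a"
  shows "D_T a b lam \<inter> D_C a b lam = CommonSys a b lam"
proof (intro equalityI subsetI; clarify)
  fix s h assume "(s, h) \<in> D_T a b lam" "(s, h) \<in> D_C a b lam"
  then have "0 < s" "F_T a b lam s h = 0" "F_C a b lam s h = 0"
    by (auto simp: D_T_def D_C_def)
  then show "(s, h) \<in> CommonSys a b lam"
    using F_T_eq_0_iff[of s] F_C_at_h_common[of s] by (auto simp: CommonSys_def h_common_def)
next
  fix s h assume "(s, h) \<in> CommonSys a b lam"
  then have s: "0 < s" "psi a b s = 2 * lam^2" and h: "h = h_common a b lam s"
    using common_equation_iff_psi by (auto simp: CommonSys_def h_common_def)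
  have "(a - b)^2 \<le> (a + b)^2"
    using assms by (intro power_mono) auto
  then have "2 * lam^2 * s \<le> (a + b)^2"
    using psi_eq_imp_bounds(3)[OF assms s] by linarith
  moreover have "F_T a b lam s h = 0" "F_C a b lam s h = 0"
    using s h F_T_eq_0_iff[of s a b lam h] F_C_at_h_common[of s a b lam]
      common_equation_iff_psi[of s a b lam] by auto
  ultimately show "(s, h) \<in> D_T a b lam \<inter> D_C a b lam"
    using s psi_eq_imp_le_s_star[OF assms s] by (auto simp: D_T_def D_C_def)
qed

theorem proposition2:
  fixes a b lam :: real
  assumes "a > b" and "b > 0" and "lam \<ge> 0"
  shows "(lam^4 < Lambda a b \<longrightarrow>
            D_T a b lam \<inter> D_C a b lam = CommonSys a b lam \<and> card (CommonSys a b lam) = 2)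
       \<and> (lam^4 = Lambda a b \<longrightarrow>
            (\<exists>s0 h0. D_T a b lam \<inter> D_C a b lam = {(s0, h0)} \<and> CommonSys a b lam = {(s0, h0)} \<and>
               (\<exists>d. (hT a b lam has_real_derivative d) (at s0) \<and>
                    (hC a b lam has_real_derivative d) (at s0))))
       \<and> (lam^4 > Lambda a b \<longrightarrow> D_T a b lam \<inter> D_C a b lam = {})"
proof -
  interpret semiaxes a b
    using assms by unfold_locales
  have DD: "D_T a b lam \<inter> D_C a b lam = CommonSys a b lam"
    using assms by (intro D_T_inter_D_C_eq_CommonSys) simp_all
  have common: "CommonSys a b lam
      = (\<lambda>s. (s, h_common a b lam s)) ` {s. 0 < s \<and> psi a b s = 2 * lam^2}"
    by (rule CommonSys_eq_image)
  have tangent: "\<exists>d. (hT a b lam has_real_derivative d) (at s_crit) \<and>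
      (hC a b lam has_real_derivative d) (at s_crit)"
    using s_crit_pos x_crit_equation by (intro hT_hC_same_derivative) (simp_all add: s_crit_squared)
  show ?thesis
  proof (intro conjI impI)
    show "D_T a b lam \<inter> D_C a b lam = CommonSys a b lam"
      by (rule DD)
  next
    assume "lam^4 < Lambda a b"
    then obtain s1 s2 where "s1 < s2" "{s. 0 < s \<and> psi a b s = 2 * lam^2} = {s1, s2}"
      using psi_level_set_by_Lambda(1) by blast
    then show "card (CommonSys a b lam) = 2"
      unfolding common by simp
  next
    assume "lam^4 = Lambda a b"
    then have "CommonSys a b lam = {(s_crit, h_common a b lam s_crit)}"
      unfolding common using psi_level_set_by_Lambda(2) by simp
    then show "\<exists>s0 h0. D_T a b lam \<inter> D_C a b lam = {(s0, h0)} \<and>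
        CommonSys a b lam = {(s0, h0)} \<and>
        (\<exists>d. (hT a b lam has_real_derivative d) (at s0) \<and>
          (hC a b lam has_real_derivative d) (at s0))"
      unfolding DD using tangent by blast
  next
    assume "Lambda a b < lam^4"
    then show "D_T a b lam \<inter> D_C a b lam = {}"
      unfolding DD common using psi_level_set_by_Lambda(3) by simp
  qed
qed

end
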